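(* Let $T$ be a tree of order $n \geq 4$, and let $u$ and $v$ be two distinct vertices of $T$ which are non-adjacent in $\Lambda(T)$. Then exactly one of the following cases occurs: (1) $u$ and $v$ are two leaves of $T$, both adjacent to a common third vertex of $T$; (2) $u$ and $v$ are adjacent in $T$, and every vertex of $T$ other than $u$ and $v$ is a leaf adjacent to exactly one of $u$ and $v$; (3) $u$ and $v$ are at distance $3$ in $T$, joined by the path $u - w - x - v$, and every vertex of $T$ other than $u, w, x, v$ is a leaf adjacent to exactly one of $u$ and $v$.
   Context: All graphs are simple and finite. For a graph $G$ and disjoint $X, Y \subseteq V(G)$, $E(X,Y)$ denotes the set of edges with one endpoint in $X$ and the other in $Y$. An ordered pair $(X,Y)$ of disjoint subsets of $V(G)$ with $|X|=|Y|=2$ is an odd pair of $G$ if $|E(X,Y)|$ is odd. A $2$-subset $\{u,v\}\subseteq V(G)$ is an odd set if it is the first component of some odd pair of $G$. The graph $\Lambda(G)$ has vertex set $V(G)$, and $uv$ is an edge of $\Lambda(G)$ iff $\{u,v\}$ is an odd set of $G$. *)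

theory Defs
  imports Main
begin

definition simple_graph :: "'a set \<Rightarrow> ('a \<Rightarrow> 'a \<Rightarrow> bool) \<Rightarrow> bool" where
  "simple_graph V E \<longleftrightarrow> finite V \<and> (\<forall>u v. E u v \<longrightarrow> u \<in> V \<and> v \<in> V)
     \<and> (\<forall>u v. E u v \<longrightarrow> E v u) \<and> (\<forall>u. \<not> E u u)"

definition is_walk :: "'a set \<Rightarrow> ('a \<Rightarrow> 'a \<Rightarrow> bool) \<Rightarrow> 'a list \<Rightarrow> bool" where
  "is_walk V E p \<longleftrightarrow> p \<noteq> [] \<and> set p \<subseteq> V \<and> (\<forall>i. Suc i < length p \<longrightarrow> E (p ! i) (p ! Suc i))"

definition is_path :: "'a set \<Rightarrow> ('a \<Rightarrow> 'a \<Rightarrow> bool) \<Rightarrow> 'a list \<Rightarrow> bool" where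
  "is_path V E p \<longleftrightarrow> is_walk V E p \<and> distinct p"

definition connected_graph :: "'a set \<Rightarrow> ('a \<Rightarrow> 'a \<Rightarrow> bool) \<Rightarrow> bool" where
  "connected_graph V E \<longleftrightarrow> (\<forall>u\<in>V. \<forall>v\<in>V. \<exists>p. is_walk V E p \<and> hd p = u \<and> last p = v)"

definition is_cycle :: "'a set \<Rightarrow> ('a \<Rightarrow> 'a \<Rightarrow> bool) \<Rightarrow> 'a list \<Rightarrow> bool" where
  "is_cycle V E c \<longleftrightarrow> is_path V E c \<and> length c \<ge> 3 \<and> E (last c) (hd c)"

definition acyclic_graph :: "'a set \<Rightarrow> ('a \<Rightarrow> 'a \<Rightarrow> bool) \<Rightarrow> bool" where
  "acyclic_graph V E \<longleftrightarrow> (\<nexists>c. is_cycle V E c)"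

definition is_tree :: "'a set \<Rightarrow> ('a \<Rightarrow> 'a \<Rightarrow> bool) \<Rightarrow> bool" where
  "is_tree V E \<longleftrightarrow> simple_graph V E \<and> V \<noteq> {} \<and> connected_graph V E \<and> acyclic_graph V E"

definition gdist :: "'a set \<Rightarrow> ('a \<Rightarrow> 'a \<Rightarrow> bool) \<Rightarrow> 'a \<Rightarrow> 'a \<Rightarrow> nat" where
  "gdist V E u v = (LEAST k. \<exists>p. is_walk V E p \<and> hd p = u \<and> last p = v \<and> length p = Suc k)"

definition degree :: "'a set \<Rightarrow> ('a \<Rightarrow> 'a \<Rightarrow> bool) \<Rightarrow> 'a \<Rightarrow> nat" where
  "degree V E v = card {w \<in> V. E v w}"

definition is_leaf :: "'a set \<Rightarrow> ('a \<Rightarrow> 'a \<Rightarrow> bool) \<Rightarrow> 'a \<Rightarrow> bool" where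
  "is_leaf V E v \<longleftrightarrow> v \<in> V \<and> degree V E v = 1"

text \<open>E(X,Y): the edges with one endpoint in X and the other in Y (X, Y disjoint),
  counted as ordered pairs (x,y) with x in X and y in Y, which is in bijection with those edges.\<close>
definition edges_between :: "('a \<Rightarrow> 'a \<Rightarrow> bool) \<Rightarrow> 'a set \<Rightarrow> 'a set \<Rightarrow> ('a \<times> 'a) set" where
  "edges_between E X Y = {(x, y). x \<in> X \<and> y \<in> Y \<and> E x y}"

definition odd_pair :: "'a set \<Rightarrow> ('a \<Rightarrow> 'a \<Rightarrow> bool) \<Rightarrow> 'a set \<Rightarrow> 'a set \<Rightarrow> bool" where
  "odd_pair V E X Y \<longleftrightarrow> X \<subseteq> V \<and> Y \<subseteq> V \<and> X \<inter> Y = {} \<and> card X = 2 \<and> card Y = 2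
     \<and> odd (card (edges_between E X Y))"

definition odd_set :: "'a set \<Rightarrow> ('a \<Rightarrow> 'a \<Rightarrow> bool) \<Rightarrow> 'a set \<Rightarrow> bool" where
  "odd_set V E X \<longleftrightarrow> (\<exists>Y. odd_pair V E X Y)"

definition Lambda_adj :: "'a set \<Rightarrow> ('a \<Rightarrow> 'a \<Rightarrow> bool) \<Rightarrow> 'a \<Rightarrow> 'a \<Rightarrow> bool" where
  "Lambda_adj V E u v \<longleftrightarrow> u \<in> V \<and> v \<in> V \<and> u \<noteq> v \<and> odd_set V E {u, v}"

end

theory Submission
  imports Defs
begin

text \<open>For distinct vertices \<open>a, b\<close> outside \<open>{u, v}\<close>, the number of edges between \<open>{u, v}\<close> and
  \<open>{a, b}\<close> is odd iff exactly one of \<open>a, b\<close> has an odd number of neighbours in \<open>{u, v}\<close>. So if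
  \<open>u, v\<close> are not adjacent in \<open>\<Lambda>(T)\<close>, all other vertices have the same parity with respect to
  \<open>{u, v}\<close>. If every other vertex is adjacent to both or neither of \<open>u, v\<close>, acyclicity and
  connectivity force \<open>u\<close> and \<open>v\<close> to be leaves with a common neighbour. If every other vertex
  is adjacent to exactly one of them, \<open>u\<close> and \<open>v\<close> are joined by a path of length 1 or 3, and
  a second neighbour of any remaining vertex would close a cycle of length 3, 4 or 6.\<close>

lemma is_walk_Cons_Cons:
  "is_walk V E (x # y # p) \<longleftrightarrow> x \<in> V \<and> E x y \<and> is_walk V E (y # p)"
  unfolding is_walk_def by (auto simp: nth_Cons split: nat.splits)

lemma is_walk_singleton: "is_walk V E [x] \<longleftrightarrow> x \<in> V"
  unfolding is_walk_def by auto

lemma simple_graph_edge_vertices: "simple_graph V E \<Longrightarrow> E a b \<Longrightarrow> a \<in> V \<and> b \<in> V"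
  unfolding simple_graph_def by blast

lemma simple_graph_sym: "simple_graph V E \<Longrightarrow> E a b \<Longrightarrow> E b a"
  unfolding simple_graph_def by blast

lemma simple_graph_irrefl: "simple_graph V E \<Longrightarrow> \<not> E a a"
  unfolding simple_graph_def by blast

lemma walk_last_in_closed_set:
  assumes "\<And>x y. x \<in> S \<Longrightarrow> E x y \<Longrightarrow> y \<in> S"
  shows "is_walk V E p \<Longrightarrow> hd p \<in> S \<Longrightarrow> last p \<in> S"
proof (induction p rule: induct_list012)
  case (3 x y p)
  then show ?case using assms by (simp add: is_walk_Cons_Cons)
qed (simp_all add: is_walk_def)

lemma connected_graph_closed_set:
  assumes "connected_graph V E" "a \<in> V" "b \<in> V" "a \<in> S"
    and "\<And>x y. x \<in> S \<Longrightarrow> E x y \<Longrightarrow> y \<in> S"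
  shows "b \<in> S"
proof -
  obtain p where "is_walk V E p" "hd p = a" "last p = b"
    using assms(1-3) unfolding connected_graph_def by blast
  then show ?thesis using walk_last_in_closed_set[of S E V p] assms(4,5) by auto
qed

lemma acyclic_walk_no_closing_edge:
  assumes "acyclic_graph V E" "is_walk V E c" "distinct c" "3 \<le> length c"
  shows "\<not> E (last c) (hd c)"
  using assms unfolding acyclic_graph_def is_cycle_def is_path_def by blast

lemma acyclic_no_triangle:
  assumes "simple_graph V E" "acyclic_graph V E"
    and "E a b" "E b c" "E c a" "distinct [a, b, c]"
  shows False
  using acyclic_walk_no_closing_edge[OF assms(2), of "[a, b, c]"] assms
  by (simp add: is_walk_Cons_Cons is_walk_singleton simple_graph_edge_vertices)

lemma acyclic_no_4_cycle:
  assumes "simple_graph V E" "acyclic_graph V E"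
    and "E a b" "E b c" "E c d" "E d a" "distinct [a, b, c, d]"
  shows False
  using acyclic_walk_no_closing_edge[OF assms(2), of "[a, b, c, d]"] assms
  by (simp add: is_walk_Cons_Cons is_walk_singleton simple_graph_edge_vertices)

lemma acyclic_no_6_cycle:
  assumes "simple_graph V E" "acyclic_graph V E"
    and "E a b" "E b c" "E c d" "E d e" "E e f" "E f a" "distinct [a, b, c, d, e, f]"
  shows False
  using acyclic_walk_no_closing_edge[OF assms(2), of "[a, b, c, d, e, f]"] assms
  by (simp add: is_walk_Cons_Cons is_walk_singleton simple_graph_edge_vertices)

lemma gdist_le_walk_length: "is_walk V E p \<Longrightarrow> gdist V E (hd p) (last p) \<le> length p - 1"
  unfolding gdist_def by (rule Least_le) (auto simp: is_walk_def)

lemma gdist_adjacent_le: "u \<in> V \<Longrightarrow> v \<in> V \<Longrightarrow> E u v \<Longrightarrow> gdist V E u v \<le> 1"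
  using gdist_le_walk_length[of V E "[u, v]"] by (simp add: is_walk_Cons_Cons is_walk_singleton)

lemma gdist_common_neighbour_le:
  "u \<in> V \<Longrightarrow> v \<in> V \<Longrightarrow> w \<in> V \<Longrightarrow> E u w \<Longrightarrow> E w v \<Longrightarrow> gdist V E u v \<le> 2"
  using gdist_le_walk_length[of V E "[u, w, v]"] by (simp add: is_walk_Cons_Cons is_walk_singleton)

lemma gdist_eq_3:
  assumes "is_walk V E [u, w, x, v]" "u \<noteq> v" "\<not> E u v" "\<nexists>y. E u y \<and> E y v"
  shows "gdist V E u v = 3"
  unfolding gdist_def
proof (rule Least_equality)
  show "\<exists>p. is_walk V E p \<and> hd p = u \<and> last p = v \<and> length p = Suc 3"
    using assms(1) by (intro exI[of _ "[u, w, x, v]"]) simp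
next
  fix k assume "\<exists>p. is_walk V E p \<and> hd p = u \<and> last p = v \<and> length p = Suc k"
  then obtain p where p: "is_walk V E p" "hd p = u" "last p = v" "length p = Suc k" by blast
  show "3 \<le> k"
  proof (rule ccontr)
    assume "\<not> 3 \<le> k"
    then consider "p = [u]" | "p = [u, v]" | y where "p = [u, y, v]"
      using p(2-4) by (cases p; cases "tl p"; cases "tl (tl p)") (auto simp: Suc_le_eq)
    then show False
      by cases (use p(1,3) assms(2-4) in \<open>auto simp: is_walk_Cons_Cons\<close>)
  qed
qed

lemma is_leaf_iff_singleton_neighbours:
  "is_leaf V E z \<longleftrightarrow> z \<in> V \<and> (\<exists>a. {y \<in> V. E z y} = {a})"
  unfolding is_leaf_def degree_def by (simp add: card_1_singleton_iff)

lemma is_leaf_neighbours_eq: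
  assumes "is_leaf V E z" "a \<in> V" "b \<in> V" "E z a" "E z b"
  shows "a = b"
proof -
  obtain c where "{y \<in> V. E z y} = {c}"
    using assms(1) unfolding is_leaf_iff_singleton_neighbours by blast
  then have "a \<in> {c}" "b \<in> {c}" using assms(2-5) by blast+
  then show ?thesis by simp
qed

lemma card_edges_between_2_2:
  assumes "distinct [u, v, a, b]"
  shows "card (edges_between E {u, v} {a, b}) =
     of_bool (E u a) + of_bool (E v a) + of_bool (E u b) + of_bool (E v b)"
proof -
  have "edges_between E {u, v} {a, b} =
      {p. p = (u, a) \<and> E u a} \<union> {p. p = (v, a) \<and> E v a} \<union>
      {p. p = (u, b) \<and> E u b} \<union> {p. p = (v, b) \<and> E v b}"
    by (auto simp: edges_between_def)
  then show ?thesis using assms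
    by (cases "E u a"; cases "E v a"; cases "E u b"; cases "E v b"; auto simp: card_insert_if)
qed

lemma not_Lambda_adj_same_parity:
  assumes "u \<in> V" "v \<in> V" "u \<noteq> v" "\<not> Lambda_adj V E u v"
    and "a \<in> V - {u, v}" "b \<in> V - {u, v}"
  shows "(E u a \<noteq> E v a) \<longleftrightarrow> (E u b \<noteq> E v b)"
proof (cases "a = b")
  case False
  have "\<not> odd_pair V E {u, v} {a, b}"
    using assms(1-4) unfolding Lambda_adj_def odd_set_def by blast
  then have "even (card (edges_between E {u, v} {a, b}))"
    using assms False unfolding odd_pair_def by auto
  moreover have "distinct [u, v, a, b]" using assms(3,5,6) False by auto
  ultimately show ?thesis using card_edges_between_2_2[of u v a b E]
    by (cases "E u a"; cases "E v a"; cases "E u b"; cases "E v b"; simp)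
qed simp

lemma even_parity_not_adjacent:
  assumes T: "is_tree V E" and "u \<in> V" "z \<in> V - {u, v}"
    and even: "\<forall>z \<in> V - {u, v}. E u z = E v z"
  shows "\<not> E u v"
proof
  assume uv: "E u v"
  from T have G: "simple_graph V E" and A: "acyclic_graph V E" and C: "connected_graph V E"
    by (simp_all add: is_tree_def)
  have "z \<in> {u, v}"
  proof (rule connected_graph_closed_set[OF C \<open>u \<in> V\<close>])
    fix x y assume x: "x \<in> {u, v}" and xy: "E x y"
    show "y \<in> {u, v}"
    proof (rule ccontr)
      assume "y \<notin> {u, v}"
      then have "E u y" "E v y" "distinct [u, v, y]"
        using x xy even simple_graph_edge_vertices[OF G] simple_graph_irrefl[OF G] uv by auto
      then show False
        using acyclic_no_triangle[OF G A uv] simple_graph_sym[OF G] by blast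
    qed
  qed (use assms in auto)
  then show False using assms(3) by blast
qed

lemma even_parity_common_neighbour:
  assumes T: "is_tree V E" and "u \<in> V" "v \<in> V" "u \<noteq> v" "\<not> E u v"
    and even: "\<forall>z \<in> V - {u, v}. E u z = E v z"
  shows "\<exists>w \<in> V - {u, v}. E u w \<and> E v w"
proof (rule ccontr)
  assume none: "\<not> ?thesis"
  from T have G: "simple_graph V E" and C: "connected_graph V E"
    by (simp_all add: is_tree_def)
  have "v \<in> {u}"
  proof (rule connected_graph_closed_set[OF C \<open>u \<in> V\<close> \<open>v \<in> V\<close>])
    fix x y assume "x \<in> {u}" "E x y"
    then show "y \<in> {u}"
      using none even assms(5) simple_graph_edge_vertices[OF G] simple_graph_irrefl[OF G] by blast
  qed simp
  then show False using assms(4) by simp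
qed

lemma even_parity_common_neighbour_unique:
  assumes T: "is_tree V E" and "u \<noteq> v" "\<not> E u v" "w \<in> V - {u, v}" "E u w" "E v w"
    and even: "\<forall>z \<in> V - {u, v}. E u z = E v z"
  shows "{y \<in> V. E u y} = {w}"
proof -
  from T have G: "simple_graph V E" and A: "acyclic_graph V E"
    by (simp_all add: is_tree_def)
  have "y = w" if "y \<in> V" "E u y" for y
  proof (rule ccontr)
    assume "y \<noteq> w"
    moreover have "y \<noteq> u" "y \<noteq> v" using that assms(3) simple_graph_irrefl[OF G] by blast+
    ultimately show False
      using acyclic_no_4_cycle[OF G A \<open>E u w\<close>, of v y] even that assms(2,4,6) simple_graph_sym[OF G]
      by auto
  qed
  then show ?thesis using assms(4,5) by blast
qed

lemma even_parity_case:
  assumes T: "is_tree V E" and "u \<in> V" "v \<in> V" "u \<noteq> v" "z \<in> V - {u, v}"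
    and even: "\<forall>z \<in> V - {u, v}. E u z = E v z"
  shows "is_leaf V E u \<and> is_leaf V E v \<and> (\<exists>w\<in>V. w \<noteq> u \<and> w \<noteq> v \<and> E u w \<and> E v w)"
proof -
  have "\<not> E u v" using even_parity_not_adjacent[OF T] assms by blast
  then obtain w where w: "w \<in> V - {u, v}" "E u w" "E v w"
    using even_parity_common_neighbour[OF T] assms by blast
  have "{y \<in> V. E u y} = {w}"
    using even_parity_common_neighbour_unique[OF T assms(4) \<open>\<not> E u v\<close> w even] .
  moreover have "{y \<in> V. E v y} = {w}"
  proof (rule even_parity_common_neighbour_unique[OF T])
    show "\<not> E v u" using \<open>\<not> E u v\<close> T unfolding is_tree_def by (auto dest: simple_graph_sym)
  qed (use assms(4) w even in auto)
  ultimately show ?thesis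
    using w assms(2,3) unfolding is_leaf_iff_singleton_neighbours by blast
qed

lemma odd_parity_adjacent_neighbour_leaf:
  assumes T: "is_tree V E" and "E u v" "z \<in> V - {u, v}" "E u z"
    and odd: "\<forall>z \<in> V - {u, v}. E u z \<noteq> E v z"
  shows "{y \<in> V. E z y} = {u}"
proof -
  from T have G: "simple_graph V E" and A: "acyclic_graph V E"
    by (simp_all add: is_tree_def)
  note sym = simple_graph_sym[OF G] and irr = simple_graph_irrefl[OF G]
  have "y = u" if y: "y \<in> V" "E z y" for y
  proof (rule ccontr)
    assume "y \<noteq> u"
    have "\<not> E v z" using odd assms(3,4) by blast
    then have "y \<noteq> v" using y(2) sym by blast
    have "y \<noteq> z" using y(2) irr by blast
    have "z \<noteq> u" "z \<noteq> v" using assms(3) by auto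
    have "E u y \<noteq> E v y" using odd y(1) \<open>y \<noteq> u\<close> \<open>y \<noteq> v\<close> by blast
    then show False
    proof (cases "E u y")
      case True
      then show False using acyclic_no_triangle[OF G A \<open>E u z\<close> \<open>E z y\<close> sym[OF True]]
          \<open>y \<noteq> u\<close> \<open>y \<noteq> z\<close> \<open>z \<noteq> u\<close> by simp
    next
      case False
      with \<open>E u y \<noteq> E v y\<close> have 2: "E v y" by simp
      then show False using acyclic_no_4_cycle[OF G A \<open>E u z\<close> \<open>E z y\<close> sym[OF 2] sym[OF \<open>E u v\<close>]]
          \<open>y \<noteq> u\<close> \<open>y \<noteq> v\<close> \<open>y \<noteq> z\<close> \<open>z \<noteq> u\<close> \<open>z \<noteq> v\<close> irr \<open>E u v\<close> by auto
    qed
  qed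
  moreover have "u \<in> V" using simple_graph_edge_vertices[OF G assms(2)] by blast
  ultimately show ?thesis using sym[OF assms(4)] by blast
qed

lemma odd_parity_path_3:
  assumes T: "is_tree V E" and "u \<in> V" "v \<in> V" "u \<noteq> v" "\<not> E u v"
    and odd: "\<forall>z \<in> V - {u, v}. E u z \<noteq> E v z"
  shows "\<exists>w x. w \<in> V - {u, v} \<and> x \<in> V - {u, v} \<and> E u w \<and> E w x \<and> E x v"
proof (rule ccontr)
  assume none: "\<not> ?thesis"
  from T have G: "simple_graph V E" and C: "connected_graph V E"
    by (simp_all add: is_tree_def)
  note sym = simple_graph_sym[OF G] and irr = simple_graph_irrefl[OF G]
    and EV = simple_graph_edge_vertices[OF G]
  let ?S = "insert u {z \<in> V - {u, v}. E u z}"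
  have "v \<in> ?S"
  proof (rule connected_graph_closed_set[OF C \<open>u \<in> V\<close> \<open>v \<in> V\<close>])
    fix x y assume x: "x \<in> ?S" and xy: "E x y"
    show "y \<in> ?S"
    proof (cases "x = u")
      case True
      then show ?thesis using xy EV[OF xy] irr[of u] assms(5) by auto
    next
      case False
      then have x': "x \<in> V - {u, v}" "E u x" using x by auto
      have "y \<noteq> v" using odd x' sym[OF xy] by blast
      moreover have "y \<in> V" using EV[OF xy] by blast
      ultimately have "y \<in> V - {u, v}" if "y \<noteq> u" using that by blast
      moreover have "\<not> E v y" if "y \<in> V - {u, v}" using none x' xy that sym by blast
      ultimately show ?thesis using odd by auto
    qed
  qed simp
  then show False using assms(4) by simp
qed

lemma odd_parity_path_3_neighbour_leaf:
  assumes T: "is_tree V E" and "E u w" "E w x" "E x v" "distinct [u, w, x, v]"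
    and "z \<in> V - {u, w, x, v}" "E u z"
    and odd: "\<forall>z \<in> V - {u, v}. E u z \<noteq> E v z"
  shows "{y \<in> V. E z y} = {u}"
proof -
  from T have G: "simple_graph V E" and A: "acyclic_graph V E"
    by (simp_all add: is_tree_def)
  note sym = simple_graph_sym[OF G] and irr = simple_graph_irrefl[OF G]
  have "y = u" if y: "y \<in> V" "E z y" for y
  proof (rule ccontr)
    assume "y \<noteq> u"
    have "\<not> E v z" using odd assms(6,7) by blast
    then have "y \<noteq> v" using y(2) sym by blast
    have "y \<noteq> z" using y(2) irr by blast
    have "y \<noteq> w"
      using acyclic_no_triangle[OF G A \<open>E u z\<close> _ sym[OF \<open>E u w\<close>]] y(2) assms(5,6) by auto
    have "y \<noteq> x"
      using acyclic_no_4_cycle[OF G A \<open>E u z\<close> _ sym[OF \<open>E w x\<close>] sym[OF \<open>E u w\<close>]] y(2) assms(5,6)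
      by auto
    have "E u y \<noteq> E v y" using odd y(1) \<open>y \<noteq> u\<close> \<open>y \<noteq> v\<close> by blast
    then show False
    proof (cases "E u y")
      case True
      then show False using acyclic_no_triangle[OF G A \<open>E u z\<close> \<open>E z y\<close> sym[OF True]]
          \<open>y \<noteq> u\<close> \<open>y \<noteq> z\<close> assms(6) by auto
    next
      case False
      with \<open>E u y \<noteq> E v y\<close> have "E y v" using sym by blast
      then show False
        using acyclic_no_6_cycle[OF G A \<open>E u z\<close> \<open>E z y\<close> _ sym[OF \<open>E x v\<close>] sym[OF \<open>E w x\<close>]
            sym[OF \<open>E u w\<close>]] assms(5,6) \<open>y \<noteq> u\<close> \<open>y \<noteq> v\<close> \<open>y \<noteq> z\<close> \<open>y \<noteq> w\<close> \<open>y \<noteq> x\<close>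
        by auto
    qed
  qed
  moreover have "u \<in> V" using simple_graph_edge_vertices[OF G assms(2)] by blast
  ultimately show ?thesis using sym[OF assms(7)] by blast
qed

lemma odd_parity_adjacent_case:
  assumes T: "is_tree V E" and "E u v"
    and odd: "\<forall>z \<in> V - {u, v}. E u z \<noteq> E v z"
  shows "\<forall>z \<in> V - {u, v}. is_leaf V E z \<and> (E z u \<noteq> E z v)"
proof
  fix z assume z: "z \<in> V - {u, v}"
  have sym: "E a b \<longleftrightarrow> E b a" for a b
    using T unfolding is_tree_def by (blast dest: simple_graph_sym)
  have "E u z \<noteq> E v z" using odd z by blast
  then consider "E u z" | "E v z" by blast
  then have "{y \<in> V. E z y} = {u} \<or> {y \<in> V. E z y} = {v}"
  proof cases
    case 1
    then show ?thesis using odd_parity_adjacent_neighbour_leaf[OF T assms(2) z _ odd] by blast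
  next
    case 2
    have "z \<in> V - {v, u}" "\<forall>z \<in> V - {v, u}. E v z \<noteq> E u z" using z odd by auto
    moreover have "E v u" using assms(2) sym by blast
    ultimately show ?thesis using odd_parity_adjacent_neighbour_leaf[OF T _ _ 2] by blast
  qed
  moreover have "E z u \<noteq> E z v" using \<open>E u z \<noteq> E v z\<close> by (simp add: sym)
  ultimately show "is_leaf V E z \<and> (E z u \<noteq> E z v)"
    using z unfolding is_leaf_iff_singleton_neighbours by blast
qed

lemma odd_parity_path_3_leaves:
  assumes T: "is_tree V E" and "E u w" "E w x" "E x v" "distinct [u, w, x, v]"
    and odd: "\<forall>z \<in> V - {u, v}. E u z \<noteq> E v z"
  shows "\<forall>z \<in> V - {u, w, x, v}. is_leaf V E z \<and> (E z u \<noteq> E z v)"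
proof
  fix z assume z: "z \<in> V - {u, w, x, v}"
  have sym: "E a b \<longleftrightarrow> E b a" for a b
    using T unfolding is_tree_def by (blast dest: simple_graph_sym)
  have "E u z \<noteq> E v z" using odd z by blast
  then consider "E u z" | "E v z" by blast
  then have "{y \<in> V. E z y} = {u} \<or> {y \<in> V. E z y} = {v}"
  proof cases
    case 1
    then show ?thesis using odd_parity_path_3_neighbour_leaf[OF T assms(2-5) z _ odd] by blast
  next
    case 2
    have "z \<in> V - {v, x, w, u}" "\<forall>z \<in> V - {v, u}. E v z \<noteq> E u z"
      "distinct [v, x, w, u]" "E v x" "E x w" "E w u"
      using z odd assms(2-5) sym[of u w] sym[of w x] sym[of x v] by auto
    then show ?thesis using odd_parity_path_3_neighbour_leaf[OF T _ _ _ _ _ 2] by blast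
  qed
  moreover have "E z u \<noteq> E z v" using \<open>E u z \<noteq> E v z\<close> by (simp add: sym)
  ultimately show "is_leaf V E z \<and> (E z u \<noteq> E z v)"
    using z unfolding is_leaf_iff_singleton_neighbours by blast
qed

lemma odd_parity_nonadjacent_case:
  assumes T: "is_tree V E" and "u \<in> V" "v \<in> V" "u \<noteq> v" "\<not> E u v"
    and odd: "\<forall>z \<in> V - {u, v}. E u z \<noteq> E v z"
  shows "gdist V E u v = 3 \<and> (\<exists>w x. is_path V E [u, w, x, v] \<and>
           (\<forall>z \<in> V - {u, w, x, v}. is_leaf V E z \<and> (E z u \<noteq> E z v)))"
proof -
  from T have G: "simple_graph V E" by (simp add: is_tree_def)
  obtain w x where wx: "w \<in> V - {u, v}" "x \<in> V - {u, v}" "E u w" "E w x" "E x v"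
    using odd_parity_path_3[OF assms] by blast
  have "\<not> E v w" using odd wx(1,3) by blast
  then have "w \<noteq> x" using wx(5) simple_graph_sym[OF G, of x v] by blast
  then have path: "is_path V E [u, w, x, v]"
    using wx assms(2-4) unfolding is_path_def by (auto simp: is_walk_Cons_Cons is_walk_singleton)
  have "\<not> (E u y \<and> E y v)" for y
  proof (cases "y \<in> V - {u, v}")
    case False
    then show ?thesis
      using assms(5) simple_graph_edge_vertices[OF G, of u y] simple_graph_irrefl[OF G, of u] by blast
  qed (use odd simple_graph_sym[OF G, of y v] in blast)
  then have "gdist V E u v = 3"
    using gdist_eq_3[of V E u w x v] path assms(4,5) unfolding is_path_def by blast
  moreover have "\<forall>z \<in> V - {u, w, x, v}. is_leaf V E z \<and> (E z u \<noteq> E z v)"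
    using odd_parity_path_3_leaves[OF T wx(3-5) _ odd] path unfolding is_path_def by blast
  ultimately show ?thesis using path by blast
qed

theorem lemma1:
  fixes V :: "'a set" and E :: "'a \<Rightarrow> 'a \<Rightarrow> bool" and u v :: 'a
  assumes "is_tree V E" and "card V \<ge> 4"
    and "u \<in> V" and "v \<in> V" and "u \<noteq> v"
    and "\<not> Lambda_adj V E u v"
  shows "let
      c1 = (is_leaf V E u \<and> is_leaf V E v \<and>
             (\<exists>w\<in>V. w \<noteq> u \<and> w \<noteq> v \<and> E u w \<and> E v w));
      c2 = (E u v \<and>
             (\<forall>z\<in>V - {u, v}. is_leaf V E z \<and> (E z u \<noteq> E z v)));
      c3 = (gdist V E u v = 3 \<and>
             (\<exists>w x. is_path V E [u, w, x, v] \<and>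
                (\<forall>z\<in>V - {u, w, x, v}. is_leaf V E z \<and> (E z u \<noteq> E z v))))
    in (c1 \<or> c2 \<or> c3) \<and> \<not> (c1 \<and> c2) \<and> \<not> (c1 \<and> c3) \<and> \<not> (c2 \<and> c3)"
proof -
  let "let c1 = ?c1; c2 = ?c2; c3 = ?c3 in _" = ?thesis
  from assms(1) have G: "simple_graph V E" by (simp add: is_tree_def)
  have "\<not> V \<subseteq> {u, v}"
    using assms(2) card_mono[of "{u, v}" V] by (auto simp: card_insert_if split: if_splits)
  then obtain z where z: "z \<in> V - {u, v}" by blast
  have parity: "(E u y \<noteq> E v y) \<longleftrightarrow> (E u z \<noteq> E v z)" if "y \<in> V - {u, v}" for y
    using not_Lambda_adj_same_parity[OF assms(3-6) that z] .
  have "?c1 \<or> ?c2 \<or> ?c3"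
  proof (cases "E u z \<noteq> E v z")
    case True
    then have "\<forall>y \<in> V - {u, v}. E u y \<noteq> E v y" using parity by blast
    then show ?thesis
      using odd_parity_adjacent_case[OF assms(1)] odd_parity_nonadjacent_case[OF assms(1,3-5)]
      by blast
  next
    case False
    then have "\<forall>y \<in> V - {u, v}. E u y = E v y" using parity by blast
    then show ?thesis using even_parity_case[OF assms(1,3-5) z] by blast
  qed
  moreover have "\<not> (?c1 \<and> ?c2)"
    using is_leaf_neighbours_eq[of V E u] assms(4) by blast
  moreover have "\<not> (?c1 \<and> ?c3)"
    using gdist_common_neighbour_le[OF assms(3,4)] simple_graph_sym[OF G] by fastforce
  moreover have "\<not> (?c2 \<and> ?c3)"
    using gdist_adjacent_le[OF assms(3,4)] by fastforce
  ultimately show ?thesis unfolding Let_def by (intro conjI)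
qed

end
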